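(* For the ring grooming instance with $n=15$, $c=1$ and uniform traffic $d_{jk}=1$ for all $j\ne k$, the minimum number of ADMs is $m=105$, attained by a routing using $35$ rings with exactly three ADMs each.
   Context: Ring grooming. An instance consists of integers $n\ge 2$ (ring size) and $c\ge 1$ (capacity), and a finite list $L$ of unordered pairs $\{j,k\}$ with $j\ne k$, $j,k\in\{1,\dots,n\}$ (repetitions allowed); these are the traffic demands. Let $d_{jk}=d_{kj}$ be the number of times $\{j,k\}$ occurs in $L$ (the traffic matrix; $d_{jj}=0$). Let $C_n$ be the cycle graph on vertices $1,\dots,n$ in cyclic order, with edges $\{l,l+1\}$ for $1\le l<n$ and $\{n,1\}$. A solution uses some finite number $r$ of "rings", each a copy of $C_n$ in which every edge has capacity $c$. A routing specifies, for every ring $i$ and every pair $j<k$, nonnegative integers $t^0_{ijk},t^1_{ijk}$: the amounts of $\{j,k\}$-traffic sent on ring $i$ along each of the two arcs of $C_n$ between $j$ and $k$. It is feasible if $\sum_i (t^0_{ijk}+t^1_{ijk})=d_{jk}$ for all $j<k$, and for every ring $i$ and every edge $e$ of $C_n$ the total traffic routed on ring $i$ along arcs containing $e$ is at most $c$. Ring $i$ needs an ADM (add/drop multiplexer) at vertex $j$ iff some traffic with endpoint $j$ is routed on ring $i$. The cost of a routing is the total number of ADMs, i.e. the number of pairs (ring $i$, vertex $j$) at which an ADM is needed. $m=m(n,c,L)$ denotes the minimum cost over all feasible routings. *)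

theory Defs
  imports Main
begin

text \<open>Vertices of the cycle C_n are 1..n; edge l (1 \<le> l \<le> n) is
  {l, l+1} for l < n and {n, 1} for l = n.
  A routing with r rings is a function t with t b i j k the amount of {j,k}-traffic
  (j < k) routed on ring i (i < r) along arc b (b \<in> {0,1}).  Values of t outside
  these index ranges are irrelevant.\<close>

definition on_arc :: "nat \<Rightarrow> nat \<Rightarrow> nat \<Rightarrow> nat \<Rightarrow> bool" where
  "on_arc b j k l = (if b = 0 then j \<le> l \<and> l < k else \<not> (j \<le> l \<and> l < k))"

definition pairs :: "nat \<Rightarrow> (nat \<times> nat) set" where
  "pairs n = {(j, k). 1 \<le> j \<and> j < k \<and> k \<le> n}"

definition feasible ::
  "nat \<Rightarrow> nat \<Rightarrow> (nat \<Rightarrow> nat \<Rightarrow> nat) \<Rightarrow> nat \<Rightarrow> (nat \<Rightarrow> nat \<Rightarrow> nat \<Rightarrow> nat \<Rightarrow> nat) \<Rightarrow> bool" where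
  "feasible n c d r t \<longleftrightarrow>
     (\<forall>(j, k) \<in> pairs n. (\<Sum>i<r. t 0 i j k + t 1 i j k) = d j k) \<and>
     (\<forall>i<r. \<forall>l\<in>{1..n}.
        (\<Sum>(j, k) \<in> pairs n. \<Sum>b\<in>{0::nat, 1}. if on_arc b j k l then t b i j k else 0) \<le> c)"

definition adms :: "nat \<Rightarrow> (nat \<Rightarrow> nat \<Rightarrow> nat \<Rightarrow> nat \<Rightarrow> nat) \<Rightarrow> nat \<Rightarrow> nat set" where
  "adms n t i = {v \<in> {1..n}. \<exists>(j, k) \<in> pairs n. (v = j \<or> v = k) \<and> t 0 i j k + t 1 i j k > 0}"

definition cost :: "nat \<Rightarrow> nat \<Rightarrow> (nat \<Rightarrow> nat \<Rightarrow> nat \<Rightarrow> nat \<Rightarrow> nat) \<Rightarrow> nat" where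
  "cost n r t = (\<Sum>i<r. card (adms n t i))"

definition min_ADM :: "nat \<Rightarrow> nat \<Rightarrow> (nat \<Rightarrow> nat \<Rightarrow> nat) \<Rightarrow> nat" where
  "min_ADM n c d = (LEAST m. \<exists>r t. feasible n c d r t \<and> cost n r t = m)"

definition uniform_traffic :: "nat \<Rightarrow> nat \<Rightarrow> nat" where
  "uniform_traffic j k = (if j \<noteq> k then 1 else 0)"

end

theory Submission
  imports Defs
begin

text \<open>Lower bound: an arc with endpoint v uses one of the two ring edges at v, so a ring with an
  ADM at v carries at most 2c units of traffic ending at v, and a ring without one carries none.
  Summing over v counts every demand twice, so under uniform traffic \<open>n (n - 1) \<le> 2c \<cdot> cost\<close>,
  i.e. \<open>210 \<le> 2 \<cdot> cost\<close>.
  Upper bound: the 35 lines of \<open>PG(3, 2)\<close> form a Steiner triple system on 15 points, i.e. they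
  partition the edges of \<open>K\<^sub>1\<^sub>5\<close> into triangles, and a triangle fits on one ring of
  capacity 1 using 3 ADMs.\<close>

definition incident :: "nat \<Rightarrow> nat \<Rightarrow> (nat \<times> nat) set" where
  "incident n v = {(j, k) \<in> pairs n. j = v \<or> k = v}"

lemma finite_pairs: "finite (pairs n)"
  by (rule finite_subset[of _ "{1..n} \<times> {1..n}"]) (auto simp: pairs_def)

lemma incident_subset_pairs: "incident n v \<subseteq> pairs n"
  by (auto simp: incident_def)

lemma card_incident:
  assumes "v \<in> {1..n}"
  shows "card (incident n v) = n - 1"
proof -
  have "bij_betw (\<lambda>w. (min v w, max v w)) ({1..n} - {v}) (incident n v)"
  proof (rule bij_betw_imageI)
    show "inj_on (\<lambda>w. (min v w, max v w)) ({1..n} - {v})"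
      by (auto simp: inj_on_def min_def max_def split: if_splits)
    show "(\<lambda>w. (min v w, max v w)) ` ({1..n} - {v}) = incident n v"
    proof (intro equalityI subsetI)
      fix p assume "p \<in> incident n v"
      then show "p \<in> (\<lambda>w. (min v w, max v w)) ` ({1..n} - {v})"
        by (intro image_eqI[where x = "if fst p = v then snd p else fst p"])
          (auto simp: incident_def pairs_def)
    qed (use assms in \<open>auto simp: incident_def pairs_def min_def max_def split: if_splits\<close>)
  qed
  then show ?thesis
    using assms by (simp flip: bij_betw_same_card)
qed

definition edge_load :: "(nat \<Rightarrow> nat \<Rightarrow> nat \<Rightarrow> nat \<Rightarrow> nat) \<Rightarrow> nat \<Rightarrow> nat \<Rightarrow> nat \<Rightarrow> nat \<Rightarrow> nat" where
  "edge_load t i l j k = (\<Sum>b\<in>{0::nat, 1}. if on_arc b j k l then t b i j k else 0)"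

lemma feasibleD:
  assumes "feasible n c d r t"
  shows feasible_demand: "(j, k) \<in> pairs n \<Longrightarrow> (\<Sum>i<r. t 0 i j k + t 1 i j k) = d j k"
    and feasible_capacity: "i < r \<Longrightarrow> l \<in> {1..n} \<Longrightarrow> (\<Sum>(j, k)\<in>pairs n. edge_load t i l j k) \<le> c"
  using assms by (auto simp: feasible_def edge_load_def)

lemma incident_traffic_le_edge_loads:
  assumes "(j, k) \<in> incident n v"
  shows "t 0 i j k + t 1 i j k \<le> edge_load t i (if v = 1 then n else v - 1) j k + edge_load t i v j k"
  using assms by (cases "v = 1") (auto simp: incident_def pairs_def on_arc_def edge_load_def)

lemma ring_incident_traffic_le:
  assumes "feasible n c d r t" "i < r" "v \<in> {1..n}"
  shows "(\<Sum>(j, k)\<in>incident n v. t 0 i j k + t 1 i j k) \<le> 2 * c"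
proof -
  define u where "u = (if v = 1 then n else v - 1)"
  have "u \<in> {1..n}"
    using assms(3) by (auto simp: u_def)
  have "(\<Sum>(j, k)\<in>incident n v. t 0 i j k + t 1 i j k)
      \<le> (\<Sum>(j, k)\<in>incident n v. edge_load t i u j k + edge_load t i v j k)"
    using incident_traffic_le_edge_loads[of _ _ n v t i] unfolding u_def by (auto intro!: sum_mono)
  also have "\<dots> \<le> (\<Sum>(j, k)\<in>pairs n. edge_load t i u j k + edge_load t i v j k)"
    by (rule sum_mono2[OF finite_pairs incident_subset_pairs]) auto
  also have "\<dots> = (\<Sum>(j, k)\<in>pairs n. edge_load t i u j k) + (\<Sum>(j, k)\<in>pairs n. edge_load t i v j k)"
    by (simp add: case_prod_beta sum.distrib)
  also have "\<dots> \<le> 2 * c"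
    using add_mono[OF feasible_capacity[OF assms(1,2) \<open>u \<in> {1..n}\<close>]
        feasible_capacity[OF assms(1,2,3)]] by simp
  finally show ?thesis .
qed

lemma incident_demand_le_adm_count:
  assumes "feasible n c d r t" "v \<in> {1..n}"
  shows "(\<Sum>(j, k)\<in>incident n v. d j k) \<le> 2 * c * card {i \<in> {..<r}. v \<in> adms n t i}"
proof -
  have "(\<Sum>(j, k)\<in>incident n v. d j k) = (\<Sum>i<r. \<Sum>(j, k)\<in>incident n v. t 0 i j k + t 1 i j k)"
    using feasible_demand[OF assms(1)] incident_subset_pairs[of n v]
    by (subst sum.swap) (auto intro!: sum.cong)
  also have "\<dots> \<le> (\<Sum>i<r. if v \<in> adms n t i then 2 * c else 0)"
  proof (rule sum_mono)
    fix i assume "i \<in> {..<r}"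
    show "(\<Sum>(j, k)\<in>incident n v. t 0 i j k + t 1 i j k) \<le> (if v \<in> adms n t i then 2 * c else 0)"
    proof (cases "v \<in> adms n t i")
      case True
      then show ?thesis
        using ring_incident_traffic_le[OF assms(1) _ assms(2)] \<open>i \<in> {..<r}\<close> by simp
    next
      case False
      then show ?thesis
        using assms(2) by (auto simp: adms_def incident_def intro!: sum.neutral)
    qed
  qed
  also have "\<dots> = 2 * c * card {i \<in> {..<r}. v \<in> adms n t i}"
    by (simp add: sum.If_cases Int_def)
  finally show ?thesis .
qed

lemma adms_subset: "adms n t i \<subseteq> {1..n}"
  by (auto simp: adms_def)

lemma cost_eq_sum_adm_counts: "cost n r t = (\<Sum>v\<in>{1..n}. card {i \<in> {..<r}. v \<in> adms n t i})"
proof -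
  have "card (adms n t i) = (\<Sum>v\<in>{1..n}. of_bool (v \<in> adms n t i))" for i
    using adms_subset[of n t i] by (simp add: sum_of_bool_eq Int_absorb1)
  then have "cost n r t = (\<Sum>i<r. \<Sum>v\<in>{1..n}. of_bool (v \<in> adms n t i))"
    unfolding cost_def by presburger
  also have "\<dots> = (\<Sum>v\<in>{1..n}. \<Sum>i<r. of_bool (v \<in> adms n t i))"
    by (rule sum.swap)
  finally show ?thesis
    by (simp add: sum_of_bool_eq Int_def)
qed

lemma cost_lower_bound:
  assumes "feasible n c d r t"
  shows "(\<Sum>v\<in>{1..n}. \<Sum>(j, k)\<in>incident n v. d j k) \<le> 2 * c * cost n r t"
  unfolding cost_eq_sum_adm_counts sum_distrib_left
  by (rule sum_mono) (rule incident_demand_le_adm_count[OF assms])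

lemma uniform_cost_lower_bound:
  assumes "feasible n c uniform_traffic r t"
  shows "n * (n - 1) \<le> 2 * c * cost n r t"
proof -
  have "(\<Sum>(j, k)\<in>incident n v. uniform_traffic j k) = n - 1" if "v \<in> {1..n}" for v
    using card_incident[OF that]
    by (simp add: incident_def pairs_def uniform_traffic_def case_prod_beta)
  then show ?thesis
    using cost_lower_bound[OF assms] by simp
qed

definition triangle_sides :: "nat \<times> nat \<times> nat \<Rightarrow> (nat \<times> nat) set" where
  "triangle_sides = (\<lambda>(x, y, z). {(x, y), (y, z), (x, z)})"

definition triangle_decomposition :: "nat \<Rightarrow> (nat \<times> nat \<times> nat) list \<Rightarrow> bool" where
  "triangle_decomposition n T \<longleftrightarrow>
     (\<forall>(x, y, z)\<in>set T. 1 \<le> x \<and> x < y \<and> y < z \<and> z \<le> n) \<and>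
     (\<forall>p\<in>pairs n. length (filter (\<lambda>\<tau>. p \<in> triangle_sides \<tau>) T) = 1)"

text \<open>Ring i carries the triangle \<open>x < y < z\<close> of \<open>T ! i\<close>: the sides \<open>{x, y}\<close> and \<open>{y, z}\<close>
  along arc 0 (edges \<open>x..y-1\<close> and \<open>y..z-1\<close>), the side \<open>{x, z}\<close> along arc 1 (all other edges),
  so every edge is used exactly once.\<close>

definition triangle_routing :: "(nat \<times> nat \<times> nat) list \<Rightarrow> nat \<Rightarrow> nat \<Rightarrow> nat \<Rightarrow> nat \<Rightarrow> nat" where
  "triangle_routing T b i j k = (case T ! i of (x, y, z) \<Rightarrow>
     if b = 0 then of_bool ((j, k) = (x, y) \<or> (j, k) = (y, z)) else of_bool ((j, k) = (x, z)))"

lemma triangle_decompositionE: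
  assumes "triangle_decomposition n T" "i < length T"
  obtains x y z where "T ! i = (x, y, z)" "1 \<le> x" "x < y" "y < z" "z \<le> n"
  using assms nth_mem[OF assms(2)] unfolding triangle_decomposition_def by (cases "T ! i") blast

lemma triangle_routing_total:
  assumes "T ! i = (x, y, z)" "x < y" "y < z"
  shows "triangle_routing T 0 i j k + triangle_routing T 1 i j k = of_bool ((j, k) \<in> triangle_sides (T ! i))"
  using assms by (auto simp: triangle_routing_def triangle_sides_def)

lemma triangle_routing_demand:
  assumes "triangle_decomposition n T" "(j, k) \<in> pairs n"
  shows "(\<Sum>i<length T. triangle_routing T 0 i j k + triangle_routing T 1 i j k) = 1"
proof -
  have "(\<Sum>i<length T. triangle_routing T 0 i j k + triangle_routing T 1 i j k)
      = (\<Sum>i<length T. of_bool ((j, k) \<in> triangle_sides (T ! i)))"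
  proof (rule sum.cong)
    fix i assume "i \<in> {..<length T}"
    then obtain x y z where "T ! i = (x, y, z)" "x < y" "y < z"
      using triangle_decompositionE[OF assms(1)] by blast
    then show "triangle_routing T 0 i j k + triangle_routing T 1 i j k
        = of_bool ((j, k) \<in> triangle_sides (T ! i))"
      by (rule triangle_routing_total)
  qed simp
  also have "\<dots> = length (filter (\<lambda>\<tau>. (j, k) \<in> triangle_sides \<tau>) T)"
    by (simp add: sum_of_bool_eq length_filter_conv_card Int_def lessThan_def)
  also have "\<dots> = 1"
    using assms unfolding triangle_decomposition_def by blast
  finally show ?thesis .
qed

lemma triangle_edge_load:
  assumes "T ! i = (x, y, z)" "1 \<le> x" "x < y" "y < z" "z \<le> n"
  shows "(\<Sum>(j, k)\<in>pairs n. edge_load (triangle_routing T) i l j k) \<le> 1"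
proof -
  let ?load = "\<lambda>(j, k). edge_load (triangle_routing T) i l j k"
  have "{(x, y), (y, z), (x, z)} \<subseteq> pairs n"
    using assms by (auto simp: pairs_def)
  moreover have "?load p = 0" if "p \<notin> {(x, y), (y, z), (x, z)}" for p
    using that assms(1) by (cases p) (auto simp: edge_load_def triangle_routing_def)
  ultimately have "sum ?load (pairs n) = sum ?load {(x, y), (y, z), (x, z)}"
    by (intro sum.mono_neutral_right[OF finite_pairs]) auto
  also have "\<dots> = of_bool (x \<le> l \<and> l < y) + of_bool (y \<le> l \<and> l < z) + of_bool (\<not> (x \<le> l \<and> l < z))"
    using assms by (simp add: edge_load_def triangle_routing_def on_arc_def)
  also have "\<dots> \<le> 1"
    using assms(3,4) by auto
  finally show ?thesis .
qed

lemma adms_triangle_routing: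
  assumes "T ! i = (x, y, z)" "1 \<le> x" "x < y" "y < z" "z \<le> n"
  shows "adms n (triangle_routing T) i = {x, y, z}"
proof (intro equalityI subsetI)
  fix v assume "v \<in> adms n (triangle_routing T) i"
  then show "v \<in> {x, y, z}"
    using assms(1) by (auto simp: adms_def triangle_routing_def split: if_splits)
next
  have endpoints: "{j, k} \<subseteq> adms n (triangle_routing T) i"
    if "(j, k) \<in> pairs n" "triangle_routing T 0 i j k = 1" for j k
  proof -
    have "j \<in> {1..n}" "k \<in> {1..n}"
      using that(1) by (auto simp: pairs_def)
    then show ?thesis
      using that unfolding adms_def by (auto intro!: bexI[where x = "(j, k)"])
  qed
  have "(x, y) \<in> pairs n" "(y, z) \<in> pairs n"
    using assms by (auto simp: pairs_def)
  moreover have "triangle_routing T 0 i x y = 1" "triangle_routing T 0 i y z = 1"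
    using assms(1) by (auto simp: triangle_routing_def)
  ultimately show "v \<in> adms n (triangle_routing T) i" if "v \<in> {x, y, z}" for v
    using that endpoints by blast
qed

lemma triangle_routing_feasible:
  assumes "triangle_decomposition n T"
  shows "feasible n 1 uniform_traffic (length T) (triangle_routing T)"
proof -
  have "(\<Sum>i<length T. triangle_routing T 0 i j k + triangle_routing T 1 i j k) = uniform_traffic j k"
    if "(j, k) \<in> pairs n" for j k
    using triangle_routing_demand[OF assms that] that by (simp add: uniform_traffic_def pairs_def)
  moreover have "(\<Sum>(j, k)\<in>pairs n. edge_load (triangle_routing T) i l j k) \<le> 1"
    if "i < length T" for i l
    using triangle_decompositionE[OF assms that] triangle_edge_load by metis
  ultimately show ?thesis
    by (auto simp: feasible_def edge_load_def)
qed

lemma card_adms_triangle_routing: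
  assumes "triangle_decomposition n T" "i < length T"
  shows "card (adms n (triangle_routing T) i) = 3"
proof -
  obtain x y z where "T ! i = (x, y, z)" "1 \<le> x" "x < y" "y < z" "z \<le> n"
    using triangle_decompositionE[OF assms] .
  then show ?thesis
    by (simp add: adms_triangle_routing)
qed

lemma min_ADM_eqI:
  assumes "feasible n c d r t" "cost n r t = m"
    and "\<And>r' t'. feasible n c d r' t' \<Longrightarrow> m \<le> cost n r' t'"
  shows "min_ADM n c d = m"
  unfolding min_ADM_def using assms by (intro Least_equality) auto

lemma pairs_eq_set: "pairs n = set [(j, k). j \<leftarrow> [1..<Suc n], k \<leftarrow> [Suc j..<Suc n]]"
  by (force simp: pairs_def)

text \<open>Reading \<open>1..15\<close> as the nonzero vectors of \<open>\<bbbF>\<^sub>2\<^sup>4\<close> in binary, the lines of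
  \<open>PG(3, 2)\<close> are the triples with \<open>x XOR y = z\<close>.\<close>

definition pg32_lines :: "(nat \<times> nat \<times> nat) list" where
  "pg32_lines = [(1,2,3), (1,4,5), (1,6,7), (1,8,9), (1,10,11), (1,12,13), (1,14,15), (2,4,6),
    (2,5,7), (2,8,10), (2,9,11), (2,12,14), (2,13,15), (3,4,7), (3,5,6), (3,8,11), (3,9,10),
    (3,12,15), (3,13,14), (4,8,12), (4,9,13), (4,10,14), (4,11,15), (5,8,13), (5,9,12),
    (5,10,15), (5,11,14), (6,8,14), (6,9,15), (6,10,12), (6,11,13), (7,8,15), (7,9,14),
    (7,10,13), (7,11,12)]"

lemma length_pg32_lines: "length pg32_lines = 35"
  by (simp add: pg32_lines_def)

lemma triangle_decomposition_pg32_lines: "triangle_decomposition 15 pg32_lines"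
  unfolding triangle_decomposition_def pairs_eq_set list_all_iff[symmetric]
  by (simp add: pg32_lines_def triangle_sides_def upt_rec)

theorem mainTheorem11:
  shows "min_ADM 15 1 uniform_traffic = 105 \<and>
    (\<exists>t. feasible 15 1 uniform_traffic 35 t \<and> cost 15 35 t = 105 \<and>
         (\<forall>i<35. card (adms 15 t i) = 3))"
proof -
  let ?t = "triangle_routing pg32_lines"
  have feasible: "feasible 15 1 uniform_traffic 35 ?t"
    using triangle_routing_feasible[OF triangle_decomposition_pg32_lines]
    by (simp add: length_pg32_lines)
  have three_adms: "\<forall>i<35. card (adms 15 ?t i) = 3"
    using card_adms_triangle_routing[OF triangle_decomposition_pg32_lines]
    by (simp add: length_pg32_lines)
  then have cost: "cost 15 35 ?t = 105"
    by (simp add: cost_def)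
  have "min_ADM 15 1 uniform_traffic = 105"
    using uniform_cost_lower_bound[of 15 1] by (intro min_ADM_eqI[OF feasible cost]) simp
  with feasible cost three_adms show ?thesis
    by blast
qed

end
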